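(* Let $R,r>0$, $\Omega=B_R\cup B_{-r}$, $q_1=\frac1{2r}+\frac1{2R}$, and let $\varphi\in L^2_0(\partial\Omega)$. Then $$PU(\mathcal{K}^*_{\partial\Omega}[\varphi])(k)=\frac12e^{-|k|q_1}\begin{bmatrix}1&0\\0&-1\end{bmatrix}P\,(U\varphi)(k)\quad\text{for a.e. }k\in\mathbb{R}.$$
   Context: Identify $\mathbb{R}^2$ with $\mathbb{C}$ and let $\Psi(z)=1/z$. For $a\in\mathbb{R}\setminus\{0\}$, $B_a$ is the open disk of radius $|a|$ centered at $(a,0)$; $\partial\Omega=\partial B_R\cup\partial B_{-r}$. $\Psi$ maps $\partial B_R\setminus\{0\}$ onto $\{x=\frac1{2R}\}$ and $\partial B_{-r}\setminus\{0\}$ onto $\{x=-\frac1{2r}\}$. For $a>0$ let $h_a(y)=1/((2a)^{-2}+y^2)$. For $\varphi$ on $\partial\Omega$ put $\varphi_R(t)=\varphi(\Psi(\frac1{2R},t))$, $\varphi_{-r}(t)=\varphi(\Psi(-\frac1{2r},t))$; arclength is $d\sigma=h_R\,dt$ on $\partial B_R$ and $h_r\,dt$ on $\partial B_{-r}$. $L^2_0(\partial\Omega)=\{\varphi\in L^2(\partial\Omega,d\sigma):\int_{\partial\Omega}\varphi\,d\sigma=0\}$. $\mathcal{F}(g)(k)=\frac1{\sqrt{2\pi}}\int g(y)e^{-iky}dy$; $U\varphi=(\mathcal{F}(h_R\varphi_R),\mathcal{F}(h_r\varphi_{-r}))^T$; $P=\frac1{\sqrt2}\begin{bmatrix}-1&1\\1&1\end{bmatrix}$.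 With $\nu$ the outward normal of $\Omega$, the Neumann–Poincaré operator is given for $\varphi\in L^2(\partial\Omega)$ by $$\mathcal{K}^*_{\partial\Omega}[\varphi](\Psi(\tfrac1{2R},y))=\frac1{4\pi R}\int_{\partial\Omega}\varphi\,d\sigma-\frac1{2\pi h_R(y)}\int_{\mathbb{R}}\frac{q_1}{q_1^2+(y-t)^2}\varphi_{-r}(t)h_r(t)\,dt,$$ $$\mathcal{K}^*_{\partial\Omega}[\varphi](\Psi(-\tfrac1{2r},y))=\frac1{4\pi r}\int_{\partial\Omega}\varphi\,d\sigma-\frac1{2\pi h_r(y)}\int_{\mathbb{R}}\frac{q_1}{q_1^2+(y-t)^2}\varphi_R(t)h_R(t)\,dt.$$ *)

theory Defs
  imports "HOL-Analysis.Analysis"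
begin

definition Psi :: "real \<Rightarrow> real \<Rightarrow> complex" where
  "Psi x t = 1 / Complex x t"

definition h :: "real \<Rightarrow> real \<Rightarrow> real" where
  "h a y = 1 / ((1 / (2 * a))^2 + y^2)"

definition phiR :: "real \<Rightarrow> (complex \<Rightarrow> complex) \<Rightarrow> real \<Rightarrow> complex" where
  "phiR R \<phi> t = \<phi> (Psi (1 / (2 * R)) t)"

definition phir :: "real \<Rightarrow> (complex \<Rightarrow> complex) \<Rightarrow> real \<Rightarrow> complex" where
  "phir r \<phi> t = \<phi> (Psi (- 1 / (2 * r)) t)"

text \<open>Integral over the boundary with respect to arclength d sigma
  (d sigma = h_R dt on dB_R and h_r dt on dB_{-r}).\<close>
definition bdry_int :: "real \<Rightarrow> real \<Rightarrow> (complex \<Rightarrow> complex) \<Rightarrow> complex" where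
  "bdry_int R r \<phi> =
     (\<integral>t. phiR R \<phi> t * complex_of_real (h R t) \<partial>lborel)
   + (\<integral>t. phir r \<phi> t * complex_of_real (h r t) \<partial>lborel)"

definition L2_bdry :: "real \<Rightarrow> real \<Rightarrow> (complex \<Rightarrow> complex) \<Rightarrow> bool" where
  "L2_bdry R r \<phi> \<longleftrightarrow>
     phiR R \<phi> \<in> borel_measurable lborel \<and> phir r \<phi> \<in> borel_measurable lborel \<and>
     integrable lborel (\<lambda>t. (cmod (phiR R \<phi> t))\<^sup>2 * h R t) \<and>
     integrable lborel (\<lambda>t. (cmod (phir r \<phi> t))\<^sup>2 * h r t)"

definition L2_0_bdry :: "real \<Rightarrow> real \<Rightarrow> (complex \<Rightarrow> complex) \<Rightarrow> bool" where
  "L2_0_bdry R r \<phi> \<longleftrightarrow> L2_bdry R r \<phi> \<and> bdry_int R r \<phi> = 0"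

text \<open>Neumann--Poincare operator K^* on dOmega, dOmega = dB_R \<union> dB_{-r}
  (B_a = open disc of radius |a| centred at (a,0)), via the given formula.
  The point z on dB_R - {0} equals Psi(1/(2R), y) with y = Im(1/z);
  similarly on dB_{-r} - {0}.  The value at 0 (a null set) is irrelevant.\<close>
definition Kstar :: "real \<Rightarrow> real \<Rightarrow> (complex \<Rightarrow> complex) \<Rightarrow> complex \<Rightarrow> complex" where
  "Kstar R r \<phi> z =
     (let q1 = 1 / (2 * r) + 1 / (2 * R); y = Im (1 / z) in
      if z \<in> sphere (complex_of_real R) R - {0} then
        bdry_int R r \<phi> / complex_of_real (4 * pi * R)
        - (\<integral>t. complex_of_real (q1 / (q1\<^sup>2 + (y - t)\<^sup>2)) * phir r \<phi> t
                  * complex_of_real (h r t) \<partial>lborel) / complex_of_real (2 * pi * h R y)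
      else if z \<in> sphere (complex_of_real (- r)) r - {0} then
        bdry_int R r \<phi> / complex_of_real (4 * pi * r)
        - (\<integral>t. complex_of_real (q1 / (q1\<^sup>2 + (y - t)\<^sup>2)) * phiR R \<phi> t
                  * complex_of_real (h R t) \<partial>lborel) / complex_of_real (2 * pi * h r y)
      else 0)"

definition fourier :: "(real \<Rightarrow> complex) \<Rightarrow> real \<Rightarrow> complex" where
  "fourier g k = (\<integral>y. g y * exp (- \<i> * complex_of_real (k * y)) \<partial>lborel)
                 / complex_of_real (sqrt (2 * pi))"

definition U :: "real \<Rightarrow> real \<Rightarrow> (complex \<Rightarrow> complex) \<Rightarrow> real \<Rightarrow> complex ^ 2" where
  "U R r \<phi> k = vector
     [fourier (\<lambda>t. complex_of_real (h R t) * phiR R \<phi> t) k,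
      fourier (\<lambda>t. complex_of_real (h r t) * phir r \<phi> t) k]"

definition Pmat :: "complex ^ 2 ^ 2" where
  "Pmat = (\<chi> i j. complex_of_real (1 / sqrt 2) *
            (vector [vector [-1, 1], vector [1, 1]] :: complex ^ 2 ^ 2) $ i $ j)"

definition Dmat :: "complex ^ 2 ^ 2" where
  "Dmat = vector [vector [1, 0], vector [0, -1]]"

end

theory Submission
  imports Defs "HOL-Probability.Sinc_Integral"
begin

text \<open>
  For a mean-zero density the constant term of K* vanishes, so h_R (K* phi)_R is -1/(2 pi) times the convolution of the
  Poisson kernel q1/(q1^2 + y^2) with h_r phi_{-r}, and symmetrically with R and r exchanged. The
  Fourier transform turns the convolution into multiplication by pi exp(-q1 |k|), so U K* phi is
  -1/2 exp(-q1 |k|) times U phi with its two components swapped; conjugating this swap by P gives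
  diag(1, -1). The identity therefore holds for every k, not only almost every k.

  The Fourier transform of the Poisson kernel is obtained by Abel regularisation: after damping by
  exp(-e |x|), Fubini against the elementary transform of exp(-q |k|) turns it into a Poisson
  integral of width e in the frequency variable, which tends to pi exp(-q |k|) as e tends to 0.
\<close>

lemma (in pair_sigma_finite) Fubini_integrable_norm_integral:
  fixes f :: "_ \<Rightarrow> _ \<Rightarrow> _::{banach, second_countable_topology}"
  assumes f: "case_prod f \<in> borel_measurable (M1 \<Otimes>\<^sub>M M2)"
    and norm_integral: "\<And>x. has_bochner_integral M2 (\<lambda>y. norm (f x y)) (g x)"
    and g: "integrable M1 g"
  shows "integrable (M1 \<Otimes>\<^sub>M M2) (case_prod f)"
proof (rule Fubini_integrable[OF f])
  have "(\<lambda>x. \<integral>y. norm (f x y) \<partial>M2) = g"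
    by (intro ext has_bochner_integral_integral_eq norm_integral)
  with g show "integrable M1 (\<lambda>x. \<integral>y. norm (case_prod f (x, y)) \<partial>M2)" by simp
  show "AE x in M1. integrable M2 (\<lambda>y. case_prod f (x, y))"
  proof (rule AE_I2)
    fix x
    assume "x \<in> space M1"
    then show "integrable M2 (\<lambda>y. case_prod f (x, y))"
      using integrable_norm_iff[OF measurable_Pair2[OF f]] norm_integral[of x]
      by (simp add: has_bochner_integral_iff)
  qed
qed

lemma integrable_mult_weight_if_square_integrable:
  fixes f :: "'a \<Rightarrow> complex" and w :: "'a \<Rightarrow> real"
  assumes w: "integrable M w" "\<And>x. w x \<ge> 0"
    and f: "f \<in> borel_measurable M" "integrable M (\<lambda>x. (cmod (f x))\<^sup>2 * w x)"
  shows "integrable M (\<lambda>x. f x * complex_of_real (w x))"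
proof (rule Bochner_Integration.integrable_bound)
  show "integrable M (\<lambda>x. ((cmod (f x))\<^sup>2 * w x + w x) / 2)"
    using w f by (intro integrable_divide Bochner_Integration.integrable_add)
  show "(\<lambda>x. f x * complex_of_real (w x)) \<in> borel_measurable M"
    using w f by measurable
  show "AE x in M. norm (f x * complex_of_real (w x)) \<le> norm (((cmod (f x))\<^sup>2 * w x + w x) / 2)"
  proof (rule AE_I2)
    fix x
    have "cmod (f x) * w x \<le> ((cmod (f x))\<^sup>2 + 1) / 2 * w x"
      using sum_squares_ge_zero[of "cmod (f x) - 1" 0] w(2)[of x]
      by (intro mult_right_mono) (simp_all add: power2_eq_square algebra_simps)
    then show "norm (f x * complex_of_real (w x)) \<le> norm (((cmod (f x))\<^sup>2 * w x + w x) / 2)"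
      using w(2)[of x] by (simp add: norm_mult algebra_simps add_divide_distrib)
  qed
qed

lemma
  fixes w :: complex
  assumes w: "Re w > 0"
  shows set_integrable_exp_neg_Ioi: "set_integrable lborel {0<..} (\<lambda>k::real. exp (- (w * of_real k)))"
    and set_integral_exp_neg_Ioi: "(LINT k:{0<..}|lborel. exp (- (w * of_real k))) = 1 / w"
proof -
  have w0: "w \<noteq> 0" using w by auto
  show integrable: "set_integrable lborel {0<..} (\<lambda>k::real. exp (- (w * of_real k)))"
    unfolding set_integrable_def
  proof (rule Bochner_Integration.integrable_bound)
    show "integrable lborel (\<lambda>x. indicator {0<..} x *\<^sub>R exp (-(x * Re w)))"
      using integrable_I0i_exp_mscale[OF w] unfolding set_integrable_def .
  qed (auto simp: indicator_def mult.commute)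
  let ?F = "\<lambda>k::real. - exp (- (w * of_real k)) / w"
  have decay: "((\<lambda>k::real. exp (- (w * of_real k))) \<longlongrightarrow> 0) at_top"
  proof (rule tendsto_norm_zero_cancel)
    have "((\<lambda>k::real. exp (- (k * Re w))) \<longlongrightarrow> 0) at_top"
      using w by (auto intro!: exp_at_bot[THEN filterlim_compose] filterlim_tendsto_pos_mult_at_top
          filterlim_ident simp: filterlim_uminus_at_bot mult.commute[of _ "Re w"])
    then show "((\<lambda>k::real. norm (exp (- (w * of_real k)))) \<longlongrightarrow> 0) at_top"
      by (simp add: mult.commute)
  qed
  have "(LBINT k=ereal 0..\<infinity>. exp (- (w * of_real k))) = 0 - ?F 0"
  proof (rule interval_integral_FTC_integrable)
    show "(?F has_vector_derivative exp (- (w * of_real x))) (at x)" for x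
      using w0 by (auto intro!: derivative_eq_intros has_vector_derivative_real_field)
    show "set_integrable lborel (einterval (ereal 0) \<infinity>) (\<lambda>k::real. exp (- (w * of_real k)))"
      using integrable by (simp add: einterval_def greaterThan_def)
    show "((?F \<circ> real_of_ereal) \<longlongrightarrow> ?F 0) (at_right (ereal 0))"
      unfolding ereal_tendsto_simps using w0 by (intro tendsto_intros continuous_intros)
    show "((?F \<circ> real_of_ereal) \<longlongrightarrow> 0) (at_left \<infinity>)"
      unfolding ereal_tendsto_simps using tendsto_divide[OF tendsto_minus[OF decay] tendsto_const[of w]] w0
      by simp
  qed auto
  then show "(LINT k:{0<..}|lborel. exp (- (w * of_real k))) = 1 / w"
    by (simp add: interval_integral_to_infinity_eq)
qed

lemma has_bochner_integral_exp_neg_abs_cis: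
  fixes a x :: real
  assumes a: "a > 0"
  shows "has_bochner_integral lborel
           (\<lambda>k. complex_of_real (exp (- a * \<bar>k\<bar>)) * exp (\<i> * complex_of_real (k * x)))
           (complex_of_real (2 * a / (a\<^sup>2 + x\<^sup>2)))"
proof -
  define w1 where "w1 = Complex a (- x)"
  define w2 where "w2 = Complex a x"
  have w1: "Re w1 > 0" and w2: "Re w2 > 0" using a by (auto simp: w1_def w2_def)
  let ?g = "\<lambda>w k::real. indicator {0<..} k *\<^sub>R exp (- (w * of_real k))"
  have half_line: "has_bochner_integral lborel (?g w) (1 / w)" if "Re w > 0" for w
    using set_integrable_exp_neg_Ioi[OF that] set_integral_exp_neg_Ioi[OF that]
    by (simp add: has_bochner_integral_iff set_integrable_def set_lebesgue_integral_def)
  have "has_bochner_integral lborel (\<lambda>k. ?g w2 (0 + (-1) * k)) (1 / w2)"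
    using half_line[OF w2] lborel_has_bochner_integral_real_affine_iff[of "-1" "?g w2" _ 0] by simp
  then have "has_bochner_integral lborel (\<lambda>k. ?g w1 k + ?g w2 (0 + (-1) * k)) (1 / w1 + 1 / w2)"
    by (intro has_bochner_integral_add half_line[OF w1])
  moreover have "1 / w1 + 1 / w2 = complex_of_real (2 * a / (a\<^sup>2 + x\<^sup>2))"
  proof -
    have "w1 * w2 = complex_of_real (a\<^sup>2 + x\<^sup>2)" "w1 + w2 = complex_of_real (2 * a)"
      by (simp_all add: w1_def w2_def complex_eq_iff power2_eq_square)
    moreover have "w1 \<noteq> 0" "w2 \<noteq> 0" using w1 w2 by auto
    ultimately show ?thesis by (simp add: field_simps)
  qed
  moreover have "AE k in lborel. ?g w1 k + ?g w2 (0 + (-1) * k)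
      = complex_of_real (exp (- a * \<bar>k\<bar>)) * exp (\<i> * complex_of_real (k * x))"
    using AE_lborel_singleton[of 0]
  proof eventually_elim
    case (elim k)
    have "complex_of_real (exp (- a * \<bar>k\<bar>)) * exp (\<i> * complex_of_real (k * x))
        = exp (complex_of_real (- a * \<bar>k\<bar>) + \<i> * complex_of_real (k * x))"
      by (simp only: exp_add exp_of_real)
    moreover have "complex_of_real (- a * \<bar>k\<bar>) + \<i> * complex_of_real (k * x)
        = (if k > 0 then - (w1 * of_real k) else - (w2 * of_real (- k)))"
      by (simp add: w1_def w2_def complex_eq_iff)
    ultimately show ?case
      using elim by (simp add: indicator_def)
  qed
  ultimately show ?thesis
    by (auto intro: has_bochner_integral_cong_AE[THEN iffD1, rotated 2])
qed

lemma has_bochner_integral_exp_neg_abs: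
  fixes a :: real
  assumes a: "a > 0"
  shows "has_bochner_integral lborel (\<lambda>k. exp (- a * \<bar>k\<bar>)) (2 / a)"
proof -
  have "has_bochner_integral lborel (\<lambda>k. complex_of_real (exp (- a * \<bar>k\<bar>))) (complex_of_real (2 / a))"
    using has_bochner_integral_exp_neg_abs_cis[OF a, of 0] a by (simp add: power2_eq_square)
  from has_bochner_integral_Re[OF this] show ?thesis by simp
qed

lemma has_bochner_integral_poisson_kernel:
  fixes q t :: real
  assumes q: "q > 0"
  shows "has_bochner_integral lborel (\<lambda>x. q / (q\<^sup>2 + (x - t)\<^sup>2)) pi"
proof -
  have "has_bochner_integral lborel (\<lambda>x. inverse (1 + x\<^sup>2)) pi"
    using integrable_inverse_1_plus_square LBINT_inverse_1_plus_square
    by (simp add: has_bochner_integral_iff set_integrable_def interval_lebesgue_integral_def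
        set_lebesgue_integral_def einterval_def)
  then have "has_bochner_integral lborel (\<lambda>x. inverse (1 + (- t / q + (1 / q) * x)\<^sup>2)) (pi * q)"
    using q lborel_has_bochner_integral_real_affine_iff[of "1 / q" "\<lambda>x. inverse (1 + x\<^sup>2)" pi "- t / q"]
    by (simp add: mult.commute)
  then have "has_bochner_integral lborel (\<lambda>x. inverse (1 + (- t / q + (1 / q) * x)\<^sup>2) / q) pi"
    using has_bochner_integral_divide_zero[of q] q by fastforce
  moreover have "inverse (1 + (- t / q + (1 / q) * x)\<^sup>2) / q = q / (q\<^sup>2 + (x - t)\<^sup>2)" for x
  proof -
    have "1 + (- t / q + (1 / q) * x)\<^sup>2 = (q\<^sup>2 + (x - t)\<^sup>2) / q\<^sup>2"
      using q by (simp add: field_simps power2_eq_square)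
    moreover have "q\<^sup>2 + (x - t)\<^sup>2 > 0" using q by (simp add: add_pos_nonneg)
    ultimately show ?thesis using q by (simp add: power2_eq_square)
  qed
  ultimately show ?thesis by simp
qed

lemma integral_poisson_kernel_rescale:
  fixes f :: "real \<Rightarrow> real"
  assumes e: "e > 0"
  shows "(\<integral>k. f k * (e / (e\<^sup>2 + (k - k0)\<^sup>2)) \<partial>lborel) = (\<integral>v. f (k0 + e * v) * (1 / (1 + v\<^sup>2)) \<partial>lborel)"
proof -
  have kernel: "e * (e / (e\<^sup>2 + (k0 + e * v - k0)\<^sup>2)) = 1 / (1 + v\<^sup>2)" for v
  proof -
    have "e\<^sup>2 + (k0 + e * v - k0)\<^sup>2 = e\<^sup>2 * (1 + v\<^sup>2)"
      by (simp add: power2_eq_square algebra_simps)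
    moreover have "1 + v\<^sup>2 > 0" by (simp add: add_pos_nonneg)
    ultimately show ?thesis using e by (simp add: power2_eq_square)
  qed
  have "(\<integral>k. f k * (e / (e\<^sup>2 + (k - k0)\<^sup>2)) \<partial>lborel)
      = (\<integral>v. e * (f (k0 + e * v) * (e / (e\<^sup>2 + (k0 + e * v - k0)\<^sup>2))) \<partial>lborel)"
    using lborel_integral_real_affine[of e "\<lambda>k. f k * (e / (e\<^sup>2 + (k - k0)\<^sup>2))" k0] e
    by (simp only: integral_mult_right_zero abs_of_pos real_scaleR_def)
  also have "\<dots> = (\<integral>v. f (k0 + e * v) * (1 / (1 + v\<^sup>2)) \<partial>lborel)"
    by (simp only: kernel mult.left_commute[of e])
  finally show ?thesis .
qed

lemma poisson_kernel_approx_identity: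
  fixes f :: "real \<Rightarrow> real" and e :: "nat \<Rightarrow> real"
  assumes f: "f \<in> borel_measurable lborel" "isCont f k0" "\<And>k. \<bar>f k\<bar> \<le> B"
    and e: "\<And>n. e n > 0" "e \<longlonglongrightarrow> 0"
  shows "(\<lambda>n. \<integral>k. f k * (e n / ((e n)\<^sup>2 + (k - k0)\<^sup>2)) \<partial>lborel) \<longlonglongrightarrow> pi * f k0"
proof -
  have [measurable]: "f \<in> borel_measurable borel" using f(1) by simp
  have cauchy: "has_bochner_integral lborel (\<lambda>v. 1 / (1 + v\<^sup>2)) pi"
    using has_bochner_integral_poisson_kernel[of 1 0] by simp
  have "(\<lambda>n. \<integral>v. f (k0 + e n * v) * (1 / (1 + v\<^sup>2)) \<partial>lborel)
      \<longlonglongrightarrow> (\<integral>v. f k0 * (1 / (1 + v\<^sup>2)) \<partial>lborel)"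
  proof (rule integral_dominated_convergence[where w = "\<lambda>v. B * (1 / (1 + v\<^sup>2))"])
    show "integrable lborel (\<lambda>v. B * (1 / (1 + v\<^sup>2)))"
      using integrable_mult_right[OF integrable.intros[OF cauchy], of B] .
    show "AE v in lborel. (\<lambda>n. f (k0 + e n * v) * (1 / (1 + v\<^sup>2))) \<longlonglongrightarrow> f k0 * (1 / (1 + v\<^sup>2))"
    proof (rule AE_I2)
      fix v
      have "(\<lambda>n. k0 + e n * v) \<longlonglongrightarrow> k0"
        using tendsto_add[OF tendsto_const tendsto_mult_left_zero[OF e(2)], of k0 v] by simp
      then show "(\<lambda>n. f (k0 + e n * v) * (1 / (1 + v\<^sup>2))) \<longlonglongrightarrow> f k0 * (1 / (1 + v\<^sup>2))"
        by (intro tendsto_mult_right isCont_tendsto_compose[OF f(2)])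
    qed
    show "AE v in lborel. norm (f (k0 + e n * v) * (1 / (1 + v\<^sup>2))) \<le> B * (1 / (1 + v\<^sup>2))" for n
      using f(3) by (simp add: abs_mult divide_right_mono add_pos_nonneg)
  qed simp_all
  moreover have "(\<integral>v. f k0 * (1 / (1 + v\<^sup>2)) \<partial>lborel) = pi * f k0"
    by (simp only: integral_mult_right_zero has_bochner_integral_integral_eq[OF cauchy] mult.commute)
  ultimately show ?thesis by (simp only: integral_poisson_kernel_rescale[OF e(1)])
qed

lemma integral_damped_poisson_kernel_cis:
  fixes q e k0 :: real
  assumes q: "q > 0" and e: "e > 0"
  shows "(\<integral>x. complex_of_real (exp (- e * \<bar>x\<bar>))
           * (complex_of_real (q / (q\<^sup>2 + x\<^sup>2)) * exp (- \<i> * complex_of_real (k0 * x))) \<partial>lborel)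
       = complex_of_real (\<integral>k. exp (- q * \<bar>k\<bar>) * (e / (e\<^sup>2 + (k - k0)\<^sup>2)) \<partial>lborel)"
proof -
  define H where "H x k = complex_of_real (exp (- e * \<bar>x\<bar>) * exp (- q * \<bar>k\<bar>))
                           * exp (\<i> * complex_of_real (x * (k - k0)))" for x k
  have H_split: "H x k = complex_of_real (exp (- e * \<bar>x\<bar>)) * exp (- \<i> * complex_of_real (k0 * x))
      * (complex_of_real (exp (- q * \<bar>k\<bar>)) * exp (\<i> * complex_of_real (k * x)))" for x k
  proof -
    have "exp (\<i> * complex_of_real (x * (k - k0)))
        = exp (- \<i> * complex_of_real (k0 * x)) * exp (\<i> * complex_of_real (k * x))"
      by (simp add: exp_add[symmetric] algebra_simps)
    then show ?thesis by (simp add: H_def mult_ac)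
  qed
  have norm_H: "has_bochner_integral lborel (\<lambda>k. norm (H x k)) (exp (- e * \<bar>x\<bar>) * (2 / q))" for x
    using has_bochner_integral_mult_right[OF has_bochner_integral_exp_neg_abs[OF q]]
    by (simp add: H_def norm_mult)
  have H_integrable: "integrable (lborel \<Otimes>\<^sub>M lborel) (case_prod H)"
  proof (rule lborel_pair.Fubini_integrable_norm_integral[OF _ norm_H])
    show "case_prod H \<in> borel_measurable (lborel \<Otimes>\<^sub>M lborel)"
      unfolding H_def by measurable
    show "integrable lborel (\<lambda>x. exp (- e * \<bar>x\<bar>) * (2 / q))"
      using integrable.intros[OF has_bochner_integral_exp_neg_abs[OF e]] by simp
  qed
  have integral_k: "(\<integral>k. H x k \<partial>lborel) = 2 * (complex_of_real (exp (- e * \<bar>x\<bar>))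
      * (complex_of_real (q / (q\<^sup>2 + x\<^sup>2)) * exp (- \<i> * complex_of_real (k0 * x))))" for x
    unfolding H_split using has_bochner_integral_exp_neg_abs_cis[OF q, of x]
    by (simp add: has_bochner_integral_integral_eq)
  have integral_x: "(\<integral>x. H x k \<partial>lborel) = 2 * complex_of_real (exp (- q * \<bar>k\<bar>) * (e / (e\<^sup>2 + (k - k0)\<^sup>2)))" for k
    using has_bochner_integral_mult_right[OF has_bochner_integral_exp_neg_abs_cis[OF e, of "k - k0"],
        of "complex_of_real (exp (- q * \<bar>k\<bar>))"]
    by (simp add: H_def has_bochner_integral_integral_eq mult_ac)
  have "(\<integral>x. complex_of_real (exp (- e * \<bar>x\<bar>))
           * (complex_of_real (q / (q\<^sup>2 + x\<^sup>2)) * exp (- \<i> * complex_of_real (k0 * x))) \<partial>lborel)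
      = (\<integral>x. (\<integral>k. H x k \<partial>lborel) \<partial>lborel) / 2"
    by (simp only: integral_k integral_mult_right_zero) simp
  also have "\<dots> = (\<integral>k. (\<integral>x. H x k \<partial>lborel) \<partial>lborel) / 2"
    using lborel_pair.Fubini_integral[OF H_integrable] by simp
  also have "\<dots> = complex_of_real (\<integral>k. exp (- q * \<bar>k\<bar>) * (e / (e\<^sup>2 + (k - k0)\<^sup>2)) \<partial>lborel)"
    by (simp only: integral_x integral_mult_right_zero integral_complex_of_real) simp
  finally show ?thesis .
qed

lemma norm_of_real_mult_exp_neg_i:
  "norm (complex_of_real c * exp (- \<i> * complex_of_real t)) = \<bar>c\<bar>"
  by (simp add: norm_mult)

lemma tendsto_integral_exp_neg_abs_damped:
  fixes f :: "real \<Rightarrow> complex" and e :: "nat \<Rightarrow> real"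
  assumes f: "integrable lborel f" and e: "\<And>n. e n > 0" "e \<longlonglongrightarrow> 0"
  shows "(\<lambda>n. \<integral>x. complex_of_real (exp (- e n * \<bar>x\<bar>)) * f x \<partial>lborel) \<longlonglongrightarrow> (\<integral>x. f x \<partial>lborel)"
proof (rule integral_dominated_convergence[where w = "\<lambda>x. norm (f x)"])
  show "AE x in lborel. (\<lambda>n. complex_of_real (exp (- e n * \<bar>x\<bar>)) * f x) \<longlonglongrightarrow> f x"
  proof (rule AE_I2)
    fix x
    have "(\<lambda>n. complex_of_real (exp (- e n * \<bar>x\<bar>)) * f x) \<longlonglongrightarrow> complex_of_real (exp (- 0 * \<bar>x\<bar>)) * f x"
      by (intro tendsto_intros e(2))
    then show "(\<lambda>n. complex_of_real (exp (- e n * \<bar>x\<bar>)) * f x) \<longlonglongrightarrow> f x" by simp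
  qed
  show "AE x in lborel. norm (complex_of_real (exp (- e n * \<bar>x\<bar>)) * f x) \<le> norm (f x)" for n
    using e(1)[of n] by (intro AE_I2) (simp add: norm_mult mult_left_le_one_le)
qed (use f in simp_all)

lemma has_bochner_integral_poisson_kernel_cis:
  fixes q k0 :: real
  assumes q: "q > 0"
  shows "has_bochner_integral lborel
           (\<lambda>x. complex_of_real (q / (q\<^sup>2 + x\<^sup>2)) * exp (- \<i> * complex_of_real (k0 * x)))
           (complex_of_real (pi * exp (- q * \<bar>k0\<bar>)))"
proof -
  define e where "e n = 1 / real (Suc n)" for n
  have e: "e n > 0" for n by (simp add: e_def)
  have "e \<longlonglongrightarrow> 0" unfolding e_def by (rule LIMSEQ_inverse_real_of_nat[simplified inverse_eq_divide])
  let ?f = "\<lambda>x. complex_of_real (q / (q\<^sup>2 + x\<^sup>2)) * exp (- \<i> * complex_of_real (k0 * x))"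
  let ?s = "\<lambda>n x. complex_of_real (exp (- e n * \<bar>x\<bar>)) * ?f x"
  have "integrable lborel (\<lambda>x. q / (q\<^sup>2 + x\<^sup>2))"
    using integrable.intros[OF has_bochner_integral_poisson_kernel[OF q, of 0]] by simp
  moreover have "norm (?f x) = q / (q\<^sup>2 + x\<^sup>2)" for x
    using q by (simp only: norm_of_real_mult_exp_neg_i) simp
  ultimately have "integrable lborel ?f"
    using integrable_norm_iff[of ?f lborel] by simp
  moreover from this have "(\<lambda>n. \<integral>x. ?s n x \<partial>lborel) \<longlonglongrightarrow> (\<integral>x. ?f x \<partial>lborel)"
    using e \<open>e \<longlonglongrightarrow> 0\<close> by (rule tendsto_integral_exp_neg_abs_damped)
  moreover have "(\<lambda>n. \<integral>x. ?s n x \<partial>lborel) \<longlonglongrightarrow> complex_of_real (pi * exp (- q * \<bar>k0\<bar>))"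
  proof -
    have "(\<lambda>n. \<integral>k. exp (- q * \<bar>k\<bar>) * (e n / ((e n)\<^sup>2 + (k - k0)\<^sup>2)) \<partial>lborel)
        \<longlonglongrightarrow> pi * exp (- q * \<bar>k0\<bar>)"
      using q by (intro poisson_kernel_approx_identity[where B = 1] e \<open>e \<longlonglongrightarrow> 0\<close>) (auto intro!: continuous_intros)
    then show ?thesis
      unfolding integral_damped_poisson_kernel_cis[OF q e] by (rule tendsto_of_real)
  qed
  ultimately show ?thesis
    by (auto simp: has_bochner_integral_iff intro: LIMSEQ_unique)
qed

lemma has_bochner_integral_poisson_kernel_shift_cis:
  fixes q t k :: real
  assumes q: "q > 0"
  shows "has_bochner_integral lborel
           (\<lambda>y. complex_of_real (q / (q\<^sup>2 + (y - t)\<^sup>2)) * exp (- \<i> * complex_of_real (k * y)))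
           (complex_of_real (pi * exp (- q * \<bar>k\<bar>)) * exp (- \<i> * complex_of_real (k * t)))"
proof -
  let ?f = "\<lambda>y. complex_of_real (q / (q\<^sup>2 + (y - t)\<^sup>2)) * exp (- \<i> * complex_of_real (k * y))"
  have "?f (t + 1 * u) = exp (- \<i> * complex_of_real (k * t))
      * (complex_of_real (q / (q\<^sup>2 + u\<^sup>2)) * exp (- \<i> * complex_of_real (k * u)))" for u
  proof -
    have "exp (- \<i> * complex_of_real (k * (t + 1 * u)))
        = exp (- \<i> * complex_of_real (k * t)) * exp (- \<i> * complex_of_real (k * u))"
      by (simp add: exp_add[symmetric] algebra_simps)
    then show ?thesis by (simp add: ac_simps)
  qed
  then have "has_bochner_integral lborel (\<lambda>u. ?f (t + 1 * u))
      (exp (- \<i> * complex_of_real (k * t)) * complex_of_real (pi * exp (- q * \<bar>k\<bar>)))"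
    using has_bochner_integral_mult_right[OF has_bochner_integral_poisson_kernel_cis[OF q, of k]]
    by presburger
  then show ?thesis
    using lborel_has_bochner_integral_real_affine_iff[of 1 ?f _ t] by (simp add: ac_simps)
qed

lemma fourier_mult_left: "fourier (\<lambda>t. c * g t) k = c * fourier g k"
  unfolding fourier_def by (simp add: ac_simps)

lemma fourier_poisson_convolution:
  fixes q k :: real and g :: "real \<Rightarrow> complex"
  assumes q: "q > 0" and g: "integrable lborel g"
  shows "fourier (\<lambda>y. \<integral>t. complex_of_real (q / (q\<^sup>2 + (y - t)\<^sup>2)) * g t \<partial>lborel) k
       = complex_of_real (pi * exp (- q * \<bar>k\<bar>)) * fourier g k"
proof -
  have [measurable]: "g \<in> borel_measurable lborel" using g by (rule borel_measurable_integrable)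
  define F where "F t y = complex_of_real (q / (q\<^sup>2 + (y - t)\<^sup>2)) * g t * exp (- \<i> * complex_of_real (k * y))"
    for t y
  have norm_F: "has_bochner_integral lborel (\<lambda>y. norm (F t y)) (norm (g t) * pi)" for t
  proof -
    have "norm (F t y) = norm (g t) * (q / (q\<^sup>2 + (y - t)\<^sup>2))" for y
    proof -
      have "norm (F t y) = norm (complex_of_real (q / (q\<^sup>2 + (y - t)\<^sup>2))
          * exp (- \<i> * complex_of_real (k * y))) * norm (g t)"
        by (simp only: F_def norm_mult ac_simps)
      then show ?thesis using q by (simp only: norm_of_real_mult_exp_neg_i) simp
    qed
    then show ?thesis
      using has_bochner_integral_mult_right[OF has_bochner_integral_poisson_kernel[OF q, of t]] by simp
  qed
  have F_integrable: "integrable (lborel \<Otimes>\<^sub>M lborel) (case_prod F)"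
  proof (rule lborel_pair.Fubini_integrable_norm_integral[OF _ norm_F])
    show "case_prod F \<in> borel_measurable (lborel \<Otimes>\<^sub>M lborel)"
      unfolding F_def by measurable
    show "integrable lborel (\<lambda>t. norm (g t) * pi)"
      using g by simp
  qed
  have integral_F: "has_bochner_integral lborel (\<lambda>y. F t y)
      (complex_of_real (pi * exp (- q * \<bar>k\<bar>)) * (g t * exp (- \<i> * complex_of_real (k * t))))" for t
    using has_bochner_integral_mult_right[OF has_bochner_integral_poisson_kernel_shift_cis[OF q, of t k], of "g t"]
    by (simp add: F_def ac_simps)
  have "(\<integral>t. (\<integral>y. F t y \<partial>lborel) \<partial>lborel)
      = complex_of_real (pi * exp (- q * \<bar>k\<bar>)) * (\<integral>t. g t * exp (- \<i> * complex_of_real (k * t)) \<partial>lborel)"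
    by (simp only: has_bochner_integral_integral_eq[OF integral_F] integral_mult_right_zero)
  moreover have "(\<integral>y. (\<integral>t. complex_of_real (q / (q\<^sup>2 + (y - t)\<^sup>2)) * g t \<partial>lborel)
      * exp (- \<i> * complex_of_real (k * y)) \<partial>lborel) = (\<integral>y. (\<integral>t. F t y \<partial>lborel) \<partial>lborel)"
    unfolding F_def integral_mult_left_zero ..
  ultimately show ?thesis
    using lborel_pair.Fubini_integral[OF F_integrable] by (simp add: fourier_def)
qed

lemma has_bochner_integral_h:
  assumes a: "a > 0"
  shows "has_bochner_integral lborel (h a) (2 * a * pi)"
proof -
  define c where "c = 1 / (2 * a)"
  have c: "c > 0" using a by (simp add: c_def)
  have "h a = (\<lambda>y. 2 * a * (c / (c\<^sup>2 + (y - 0)\<^sup>2)))"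
  proof
    fix y
    have "2 * a * (c / (c\<^sup>2 + (y - 0)\<^sup>2)) = (2 * a * c) / (c\<^sup>2 + y\<^sup>2)" by simp
    moreover have "2 * a * c = 1" using a by (simp add: c_def)
    ultimately show "h a y = 2 * a * (c / (c\<^sup>2 + (y - 0)\<^sup>2))" by (simp add: h_def c_def)
  qed
  then show ?thesis
    using has_bochner_integral_mult_right[OF has_bochner_integral_poisson_kernel[OF c, of 0]] by simp
qed

lemma integrable_h_mult_L2:
  assumes a: "a > 0" and f: "f \<in> borel_measurable lborel"
    and f_L2: "integrable lborel (\<lambda>t. (cmod (f t))\<^sup>2 * h a t)"
  shows "integrable lborel (\<lambda>t. complex_of_real (h a t) * f t)"
proof -
  have "h a t \<ge> 0" for t by (simp add: h_def)
  then show ?thesis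
    using integrable_mult_weight_if_square_integrable[OF integrable.intros[OF has_bochner_integral_h[OF a]] _ f f_L2]
    by (simp add: mult.commute)
qed

lemma norm_Psi_minus_square:
  fixes x t c :: real
  assumes x: "x \<noteq> 0"
  shows "(norm (Psi x t - complex_of_real c))\<^sup>2 = (1 - 2 * c * x) / (x\<^sup>2 + t\<^sup>2) + c\<^sup>2"
proof -
  define d where "d = x\<^sup>2 + t\<^sup>2"
  have d: "d > 0" using x by (simp add: d_def add_pos_nonneg)
  have "Psi x t = Complex (x / d) (- t / d)"
    by (simp add: Psi_def d_def complex_eq_iff Re_divide Im_divide power2_eq_square)
  then have "(norm (Psi x t - complex_of_real c))\<^sup>2 = (x / d - c)\<^sup>2 + (t / d)\<^sup>2"
    by (simp add: cmod_power2)
  also have "\<dots> = (x\<^sup>2 + t\<^sup>2) / d\<^sup>2 - 2 * c * x / d + c\<^sup>2"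
    using d by (simp add: field_simps power2_eq_square)
  also have "\<dots> = d / d\<^sup>2 - 2 * c * x / d + c\<^sup>2" by (simp add: d_def)
  also have "\<dots> = (1 - 2 * c * x) / d + c\<^sup>2"
    using d by (simp add: field_simps power2_eq_square)
  finally show ?thesis by (simp add: d_def)
qed

lemma Psi_in_sphere_iff:
  fixes x t c :: real
  assumes x: "x \<noteq> 0"
  shows "Psi x t \<in> sphere (complex_of_real c) \<bar>c\<bar> \<longleftrightarrow> 2 * c * x = 1"
proof -
  have "Psi x t \<in> sphere (complex_of_real c) \<bar>c\<bar> \<longleftrightarrow> norm (Psi x t - complex_of_real c) = \<bar>c\<bar>"
    by (simp add: dist_norm norm_minus_commute)
  also have "\<dots> \<longleftrightarrow> (norm (Psi x t - complex_of_real c))\<^sup>2 = \<bar>c\<bar>\<^sup>2"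
    by (rule power2_eq_iff_nonneg[symmetric]) simp_all
  also have "\<dots> \<longleftrightarrow> 2 * c * x = 1"
  proof -
    have "x\<^sup>2 + t\<^sup>2 > 0" using x by (simp add: add_pos_nonneg)
    then show ?thesis using norm_Psi_minus_square[OF x] x by simp
  qed
  finally show ?thesis .
qed

lemma Psi_nonzero:
  assumes "x \<noteq> 0"
  shows "Psi x t \<noteq> 0"
proof -
  have "Complex x t \<noteq> 0" using assms by (simp add: complex_eq_iff)
  then show ?thesis by (simp add: Psi_def)
qed

lemma h_mult_phiR_Kstar:
  assumes R: "R > 0" and mean_zero: "bdry_int R r \<phi> = 0"
    and q: "q = 1 / (2 * r) + 1 / (2 * R)"
  shows "complex_of_real (h R t) * phiR R (Kstar R r \<phi>) t
       = complex_of_real (- 1 / (2 * pi))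
         * (\<integral>s. complex_of_real (q / (q\<^sup>2 + (t - s)\<^sup>2)) * (complex_of_real (h r s) * phir r \<phi> s) \<partial>lborel)"
proof -
  have on_dB_R: "Psi (1 / (2 * R)) t \<in> sphere (complex_of_real R) R - {0}"
    using Psi_in_sphere_iff[of "1 / (2 * R)" t R] Psi_nonzero[of "1 / (2 * R)" t] R by simp
  have "h R t > 0" using R by (simp add: h_def add_pos_nonneg)
  with on_dB_R show ?thesis
    by (simp add: phiR_def Kstar_def Psi_def mean_zero q field_simps mult_ac)
qed

lemma h_mult_phir_Kstar:
  assumes R: "R > 0" and r: "r > 0" and mean_zero: "bdry_int R r \<phi> = 0"
    and q: "q = 1 / (2 * r) + 1 / (2 * R)"
  shows "complex_of_real (h r t) * phir r (Kstar R r \<phi>) t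
       = complex_of_real (- 1 / (2 * pi))
         * (\<integral>s. complex_of_real (q / (q\<^sup>2 + (t - s)\<^sup>2)) * (complex_of_real (h R s) * phiR R \<phi> s) \<partial>lborel)"
proof -
  have "Psi (- 1 / (2 * r)) t \<notin> sphere (complex_of_real R) R"
    using Psi_in_sphere_iff[of "- 1 / (2 * r)" t R] R r by (simp add: field_simps)
  moreover have "Psi (- 1 / (2 * r)) t \<in> sphere (complex_of_real (- r)) r - {0}"
    using Psi_in_sphere_iff[of "- 1 / (2 * r)" t "- r"] Psi_nonzero[of "- 1 / (2 * r)" t] r by simp
  moreover have "h r t > 0" using r by (simp add: h_def add_pos_nonneg)
  ultimately show ?thesis
    by (simp add: phir_def Kstar_def Psi_def mean_zero q field_simps mult_ac)
qed

lemma Pmat_neg_swap: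
  fixes A B c :: complex
  shows "Pmat *v vector [- (c * B), - (c * A)] = c *s (Dmat ** Pmat *v vector [A, B])"
  by (simp add: vec_eq_iff forall_2 matrix_vector_mult_def sum_2 Pmat_def Dmat_def
      matrix_matrix_mult_def algebra_simps)

theorem lemma4p2:
  fixes R r :: real and \<phi> :: "complex \<Rightarrow> complex"
  assumes "R > 0" and "r > 0"
    and "L2_0_bdry R r \<phi>"
  shows "AE k in lborel.
           Pmat *v U R r (Kstar R r \<phi>) k
         = (complex_of_real (1 / 2 * exp (- \<bar>k\<bar> * (1 / (2 * r) + 1 / (2 * R))))) *s
             (Dmat ** Pmat *v U R r \<phi> k)"
proof (rule AE_I2)
  fix k :: real
  define q where "q = 1 / (2 * r) + 1 / (2 * R)"
  have q: "q > 0" using assms(1,2) by (simp add: q_def add_pos_pos)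
  have mean_zero: "bdry_int R r \<phi> = 0" and L2: "L2_bdry R r \<phi>"
    using assms(3) by (simp_all add: L2_0_bdry_def)
  have gR: "integrable lborel (\<lambda>t. complex_of_real (h R t) * phiR R \<phi> t)"
    and gr: "integrable lborel (\<lambda>t. complex_of_real (h r t) * phir r \<phi> t)"
    using L2 assms(1,2) by (simp_all add: L2_bdry_def integrable_h_mult_L2)
  let ?c = "complex_of_real (1 / 2 * exp (- \<bar>k\<bar> * q))"
  have "fourier (\<lambda>t. complex_of_real (h R t) * phiR R (Kstar R r \<phi>) t) k
      = - (?c * fourier (\<lambda>t. complex_of_real (h r t) * phir r \<phi> t) k)"
    by (simp only: h_mult_phiR_Kstar[OF assms(1) mean_zero q_def] fourier_mult_left
        fourier_poisson_convolution[OF q gr]) (simp add: mult_ac)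
  moreover have "fourier (\<lambda>t. complex_of_real (h r t) * phir r (Kstar R r \<phi>) t) k
      = - (?c * fourier (\<lambda>t. complex_of_real (h R t) * phiR R \<phi> t) k)"
    by (simp only: h_mult_phir_Kstar[OF assms(1,2) mean_zero q_def] fourier_mult_left
        fourier_poisson_convolution[OF q gR]) (simp add: mult_ac)
  ultimately show "Pmat *v U R r (Kstar R r \<phi>) k = ?c *s (Dmat ** Pmat *v U R r \<phi> k)"
    by (simp only: U_def Pmat_neg_swap)
qed

end
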